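(* Let $\Omega\subset\mathbb R^3$ be a bounded domain with $C^2$ boundary $\Gamma$, and let $\mathbf u\in C^1(\overline\Omega)^3$ be divergence-free. Let $\kappa_1,\kappa_2$ be the principal curvatures of $\Gamma$ and $\mathcal A$ its shape operator. Then on $\Gamma$, $$(\mathbf u\cdot\nabla\mathbf u)\cdot\mathbf n=\mathbf u^{\boldsymbol\tau}\cdot\nabla_\Gamma u^{\mathbf n}-u^{\mathbf n}\operatorname{div}_\Gamma\mathbf u^{\boldsymbol\tau}-(\kappa_1+\kappa_2)(u^{\mathbf n})^2-\mathbf u^{\boldsymbol\tau}\cdot\mathcal A\mathbf u^{\boldsymbol\tau}$$ $$=2\,\mathbf u^{\boldsymbol\tau}\cdot\nabla_\Gamma u^{\mathbf n}-\operatorname{div}_\Gamma(u^{\mathbf n}\mathbf u^{\boldsymbol\tau})-(\kappa_1+\kappa_2)(u^{\mathbf n})^2-\mathbf u^{\boldsymbol\tau}\cdot\mathcal A\mathbf u^{\boldsymbol\tau}.$$ Consequently, if $\mathcal U\in C^1(\overline\Omega)^3$ is also divergence-free and $\mathbf u=\mathcal U$ on a union $\Gamma_+$ of boundary components, then $(\mathbf u\cdot\nabla\mathbf u)\cdot\mathbf n=(\mathcal U\cdot\nabla\mathcal U)\cdot\mathbf n$ on $\Gamma_+$.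
   Context: $\mathbf n$ is the outward unit normal on $\Gamma$. $u^{\mathbf n}=\mathbf u\cdot\mathbf n$ and $\mathbf u^{\boldsymbol\tau}=\mathbf u-u^{\mathbf n}\mathbf n$ on $\Gamma$, the latter regarded as a tangent field. The shape operator $\mathcal A$ maps a tangent vector $\mathbf v$ to the directional derivative of $\mathbf n$ in the direction $\mathbf v$ (a tangent vector); $\kappa_1,\kappa_2$ are its eigenvalues (so they are positive on a sphere with this outward-normal convention). $\nabla_\Gamma$ and $\operatorname{div}_\Gamma$ are the surface gradient and surface divergence on $\Gamma$. *)

theory Defs
  imports "HOL-Analysis.Analysis"
begin

type_synonym R3 = "real^3"

definition C1_on :: "'a::real_normed_vector set \<Rightarrow> ('a \<Rightarrow> 'b::real_normed_vector) \<Rightarrow> bool" where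
  "C1_on U f \<longleftrightarrow> (\<exists>f'. (\<forall>x\<in>U. (f has_derivative blinfun_apply (f' x)) (at x)) \<and> continuous_on U f')"

definition C2_boundary :: "R3 set \<Rightarrow> bool" where
  "C2_boundary \<Omega> \<longleftrightarrow>
     (\<forall>p\<in>frontier \<Omega>. \<exists>V (\<phi>::R3 \<Rightarrow> real) \<phi>'. open V \<and> p \<in> V \<and>
        (\<forall>x\<in>V. (\<phi> has_derivative blinfun_apply (\<phi>' x)) (at x)) \<and> C1_on V \<phi>' \<and>
        (\<forall>x\<in>V. \<phi>' x \<noteq> 0) \<and>
        \<Omega> \<inter> V = {x\<in>V. \<phi> x < 0} \<and> frontier \<Omega> \<inter> V = {x\<in>V. \<phi> x = 0})"

definition bounded_C2_domain :: "R3 set \<Rightarrow> bool" where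
  "bounded_C2_domain \<Omega> \<longleftrightarrow> open \<Omega> \<and> connected \<Omega> \<and> \<Omega> \<noteq> {} \<and> bounded \<Omega> \<and> C2_boundary \<Omega>"

text \<open>u in C^1(closure Omega)^3, with Du the (continuously extended) derivative.\<close>
definition C1_up_to_boundary :: "R3 set \<Rightarrow> (R3 \<Rightarrow> R3) \<Rightarrow> (R3 \<Rightarrow> (R3 \<Rightarrow>\<^sub>L R3)) \<Rightarrow> bool" where
  "C1_up_to_boundary \<Omega> u Du \<longleftrightarrow>
     continuous_on (closure \<Omega>) u \<and>
     (\<forall>x\<in>\<Omega>. (u has_derivative blinfun_apply (Du x)) (at x)) \<and>
     continuous_on (closure \<Omega>) Du"

definition divergence :: "(R3 \<Rightarrow>\<^sub>L R3) \<Rightarrow> real" where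
  "divergence D = (\<Sum>i\<in>UNIV. (blinfun_apply D (axis i 1)) $ i)"

definition surface_curve :: "R3 set \<Rightarrow> R3 \<Rightarrow> (real \<Rightarrow> R3) \<Rightarrow> R3 \<Rightarrow> bool" where
  "surface_curve S p \<gamma> v \<longleftrightarrow> range \<gamma> \<subseteq> S \<and> \<gamma> 0 = p \<and> (\<gamma> has_vector_derivative v) (at 0)"

definition tangent_space :: "R3 set \<Rightarrow> R3 \<Rightarrow> R3 set" where
  "tangent_space S p = {v. \<exists>\<gamma>. surface_curve S p \<gamma> v}"

definition surface_grad :: "R3 set \<Rightarrow> (R3 \<Rightarrow> real) \<Rightarrow> R3 \<Rightarrow> R3" where
  "surface_grad S f p = (THE g. g \<in> tangent_space S p \<and>
     (\<forall>\<gamma> v. surface_curve S p \<gamma> v \<longrightarrow> ((f \<circ> \<gamma>) has_real_derivative (g \<bullet> v)) (at 0)))"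

definition surface_div :: "R3 set \<Rightarrow> (R3 \<Rightarrow> R3) \<Rightarrow> R3 \<Rightarrow> real" where
  "surface_div S w p = (\<Sum>i\<in>UNIV. surface_grad S (\<lambda>x. w x $ i) p $ i)"

definition outward_normal :: "R3 set \<Rightarrow> R3 \<Rightarrow> R3" where
  "outward_normal \<Omega> p = (THE n. norm n = 1 \<and>
     (\<forall>v\<in>tangent_space (frontier \<Omega>) p. n \<bullet> v = 0) \<and>
     (\<exists>e>0. \<forall>t. 0 < t \<and> t < e \<longrightarrow> p + t *\<^sub>R n \<notin> closure \<Omega> \<and> p - t *\<^sub>R n \<in> \<Omega>))"

definition shape_operator :: "R3 set \<Rightarrow> R3 \<Rightarrow> R3 \<Rightarrow> R3" where
  "shape_operator \<Omega> p v = (THE w. \<forall>\<gamma>. surface_curve (frontier \<Omega>) p \<gamma> v \<longrightarrow>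
     ((outward_normal \<Omega> \<circ> \<gamma>) has_vector_derivative w) (at 0))"

text \<open>k1, k2 are the principal curvatures at p: eigenvalues of the shape operator on
  the tangent plane (with an orthonormal eigenbasis, the operator being self-adjoint).\<close>
definition principal_curvatures :: "R3 set \<Rightarrow> R3 \<Rightarrow> real \<Rightarrow> real \<Rightarrow> bool" where
  "principal_curvatures \<Omega> p k1 k2 \<longleftrightarrow>
     (\<exists>e1 e2. e1 \<in> tangent_space (frontier \<Omega>) p \<and> e2 \<in> tangent_space (frontier \<Omega>) p \<and>
        norm e1 = 1 \<and> norm e2 = 1 \<and> e1 \<bullet> e2 = 0 \<and>
        shape_operator \<Omega> p e1 = k1 *\<^sub>R e1 \<and> shape_operator \<Omega> p e2 = k2 *\<^sub>R e2)"

definition normal_comp :: "R3 set \<Rightarrow> (R3 \<Rightarrow> R3) \<Rightarrow> R3 \<Rightarrow> real" where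
  "normal_comp \<Omega> u x = u x \<bullet> outward_normal \<Omega> x"

definition tangential_part :: "R3 set \<Rightarrow> (R3 \<Rightarrow> R3) \<Rightarrow> R3 \<Rightarrow> R3" where
  "tangential_part \<Omega> u x = u x - normal_comp \<Omega> u x *\<^sub>R outward_normal \<Omega> x"

definition union_of_boundary_components :: "R3 set \<Rightarrow> R3 set \<Rightarrow> bool" where
  "union_of_boundary_components \<Omega> G \<longleftrightarrow>
     G \<subseteq> frontier \<Omega> \<and> (\<forall>x\<in>G. connected_component_set (frontier \<Omega>) x \<subseteq> G)"

end

theory Submission
  imports Defs
begin

text \<open>Near a boundary point write \<Omega> = {\<phi> < 0} and extend the outward unit normal as
  \<nu> = \<nabla>\<phi> / |\<nabla>\<phi>|. Differentiating u \<bullet> \<nu> and u - (u \<bullet> \<nu>) \<nu> along the boundary expresses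
  the surface gradient of the normal component and the surface divergence of the tangential
  part through Du and the differential of \<nu>; the latter is the shape operator on tangent
  vectors and kills \<nu>, so its trace is the sum of the principal curvatures. Since div u = 0
  persists to the boundary by continuity, (Du u) \<bullet> \<nu> becomes the stated combination, and the
  product rule for the surface divergence gives the second form. The right-hand side only
  involves u on the boundary, whence the statement about fields agreeing on boundary components.

  Two analytic facts carry the argument: through every boundary point there are curves in the
  boundary with any prescribed tangent velocity (inverse function theorem), and the derivative of
  u in \<Omega> is a derivative within the closure at boundary points, because nearby points of the
  closure are joined to them through \<Omega> by polygons of comparable length.\<close>

section \<open>Gradients and traces of linear maps\<close>

definition grad_of :: "(real^'n \<Rightarrow> real) \<Rightarrow> real^'n" where
  "grad_of L = (\<chi> j. L (axis j 1))"

lemma linear_eq_inner_grad_of: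
  fixes L :: "real^'n \<Rightarrow> real"
  assumes "linear L"
  shows "L w = grad_of L \<bullet> w"
proof -
  have "L w = L (\<Sum>j\<in>UNIV. w $ j *\<^sub>R axis j 1)"
    by (simp add: basis_expansion flip: scalar_mult_eq_scaleR)
  also have "\<dots> = grad_of L \<bullet> w"
    using assms by (simp add: linear_sum linear_scale grad_of_def inner_vec_def mult.commute)
  finally show ?thesis .
qed

lemma trace_matrix: "trace (matrix f) = (\<Sum>i\<in>UNIV. f (axis i 1) $ i)"
  by (simp add: trace_def matrix_def)

lemma trace_matrix_orthonormal_basis:
  fixes M :: "real^'n \<Rightarrow> real^'n" and B :: "(real^'n) set"
  assumes "linear M" "finite B" "pairwise orthogonal B" "\<And>b. b \<in> B \<Longrightarrow> norm b = 1"
    and "span B = UNIV"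
  shows "trace (matrix M) = (\<Sum>b\<in>B. b \<bullet> M b)"
proof -
  have "M (axis i 1) = (\<Sum>b\<in>B. b $ i *\<^sub>R M b)" for i
  proof -
    have "axis i 1 = (\<Sum>b\<in>B. (axis i 1 \<bullet> b) *\<^sub>R b)"
      using orthonormal_basis_expand[OF assms(3,4)] assms(2,5) by simp
    then show ?thesis
      using assms(1) by (simp add: linear_sum linear_scale inner_axis' o_def)
  qed
  then show ?thesis
    unfolding trace_matrix by (simp add: sum.swap[of _ UNIV] inner_vec_def mult.commute)
qed

lemma trace_matrix_orthonormal_triple:
  fixes M :: "real^3 \<Rightarrow> real^3" and e1 e2 e3 :: "real^3"
  assumes "linear M" "norm e1 = 1" "norm e2 = 1" "norm e3 = 1"
    and "e1 \<bullet> e2 = 0" "e1 \<bullet> e3 = 0" "e2 \<bullet> e3 = 0"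
  shows "trace (matrix M) = e1 \<bullet> M e1 + e2 \<bullet> M e2 + e3 \<bullet> M e3"
proof -
  let ?B = "{e1, e2, e3}"
  have distinct: "e1 \<noteq> e2" "e1 \<noteq> e3" "e2 \<noteq> e3"
    using assms by (auto simp: norm_eq_1)
  have orth: "pairwise orthogonal ?B"
    using assms by (auto simp: pairwise_def orthogonal_def inner_commute)
  have "0 \<notin> ?B" using assms by auto
  then have "independent ?B"
    using pairwise_orthogonal_independent[OF orth] by blast
  then have "dim ?B = DIM(real^3)"
    using distinct by (simp add: dim_eq_card_independent)
  then have "span ?B = UNIV" by (metis dim_eq_full)
  then show ?thesis
    using trace_matrix_orthonormal_basis[OF assms(1) _ orth] assms distinct by (auto simp: add.assoc)
qed

lemma trace_matrix_add:
  fixes f g :: "real^'n \<Rightarrow> real^'n"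
  shows "trace (matrix (\<lambda>h. f h + g h)) = trace (matrix f) + trace (matrix g)"
  by (simp add: trace_matrix sum.distrib)

lemma trace_matrix_diff:
  fixes f g :: "real^'n \<Rightarrow> real^'n"
  shows "trace (matrix (\<lambda>h. f h - g h)) = trace (matrix f) - trace (matrix g)"
  by (simp add: trace_matrix sum_subtractf)

lemma trace_matrix_scaleR:
  fixes f :: "real^'n \<Rightarrow> real^'n"
  shows "trace (matrix (\<lambda>h. c *\<^sub>R f h)) = c * trace (matrix f)"
  by (simp add: trace_matrix sum_distrib_left)

lemma trace_matrix_rank_one:
  fixes L :: "real^'n \<Rightarrow> real"
  assumes "linear L"
  shows "trace (matrix (\<lambda>h. L h *\<^sub>R w)) = L w"
  using linear_eq_inner_grad_of[OF assms, of w]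
  by (simp add: trace_matrix grad_of_def inner_vec_def)

text \<open>The pointwise core of the theorem: with B the derivative of u at a boundary point p, Dn that
  of the unit normal \<nu> and n = \<nu> p, Lf, Mt and K are the derivatives at p of u \<bullet> \<nu>,
  of u - (u \<bullet> \<nu>) \<nu> and of their product.\<close>

lemma normal_derivative_identity:
  fixes a n :: "real^3" and B Dn Mt K :: "real^3 \<Rightarrow> real^3" and Lf :: "real^3 \<Rightarrow> real"
  assumes n: "n \<bullet> n = 1" and B: "linear B" "trace (matrix B) = 0"
    and Dn: "linear Dn" "\<And>w. n \<bullet> Dn w = 0"
    and Lf: "Lf = (\<lambda>h. a \<bullet> Dn h + B h \<bullet> n)"
    and Mt: "Mt = (\<lambda>h. B h - ((a \<bullet> n) *\<^sub>R Dn h + Lf h *\<^sub>R n))"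
    and K: "K = (\<lambda>h. (a \<bullet> n) *\<^sub>R Mt h + Lf h *\<^sub>R (a - (a \<bullet> n) *\<^sub>R n))"
  defines "an \<equiv> a \<bullet> n" and "aT \<equiv> a - (a \<bullet> n) *\<^sub>R n"
  shows "B a \<bullet> n = aT \<bullet> grad_of Lf - an * (trace (matrix Mt) - n \<bullet> Mt n)
           - trace (matrix Dn) * an\<^sup>2 - aT \<bullet> Dn aT"
    and "B a \<bullet> n = 2 * (aT \<bullet> grad_of Lf) - (trace (matrix K) - n \<bullet> K n)
           - trace (matrix Dn) * an\<^sup>2 - aT \<bullet> Dn aT"
proof -
  have lin_Lf: "linear Lf"
    unfolding Lf
    by (rule linearI) (simp_all add: linear_add[OF B(1)] linear_add[OF Dn(1)] linear_scale[OF B(1)]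
        linear_scale[OF Dn(1)] inner_add_left inner_add_right algebra_simps)
  have a_split: "a = aT + an *\<^sub>R n" by (simp add: aT_def an_def)
  have aT_n: "n \<bullet> aT = 0" using n by (simp add: aT_def inner_diff_right inner_commute)
  have Ba: "B a \<bullet> n = B aT \<bullet> n + an * (n \<bullet> B n)"
    by (subst a_split) (simp add: linear_add[OF B(1)] linear_scale[OF B(1)] inner_add_left
        inner_commute[of "B n" n])
  have "a \<bullet> Dn aT = aT \<bullet> Dn aT"
    by (subst a_split) (simp add: inner_add_left Dn(2))
  then have Lf_aT: "Lf aT = aT \<bullet> Dn aT + B aT \<bullet> n"
    by (simp add: Lf)
  have grad_aT: "aT \<bullet> grad_of Lf = Lf aT"
    using linear_eq_inner_grad_of[OF lin_Lf, of aT] by (simp add: inner_commute)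
  have tr_Mt: "trace (matrix Mt) = trace (matrix B) - an * trace (matrix Dn) - Lf n"
    by (simp add: Mt trace_matrix_diff trace_matrix_add trace_matrix_scaleR
        trace_matrix_rank_one[OF lin_Lf] an_def)
  have nMtn: "n \<bullet> Mt n = n \<bullet> B n - Lf n"
    using n by (simp add: Mt inner_diff_right inner_add_right Dn(2))
  have tangential_div_Mt: "trace (matrix Mt) - n \<bullet> Mt n = - an * trace (matrix Dn) - n \<bullet> B n"
    using tr_Mt nMtn B(2) by simp
  have tangential_div_K: "trace (matrix K) - n \<bullet> K n = Lf aT + an * (trace (matrix Mt) - n \<bullet> Mt n)"
    using aT_n
    by (simp add: K aT_def[symmetric] trace_matrix_add trace_matrix_scaleR trace_matrix_rank_one[OF lin_Lf]
        inner_add_right an_def algebra_simps)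
  show "B a \<bullet> n = aT \<bullet> grad_of Lf - an * (trace (matrix Mt) - n \<bullet> Mt n)
      - trace (matrix Dn) * an\<^sup>2 - aT \<bullet> Dn aT"
    unfolding grad_aT tangential_div_Mt Lf_aT Ba by (simp add: algebra_simps power2_eq_square)
  show "B a \<bullet> n = 2 * (aT \<bullet> grad_of Lf) - (trace (matrix K) - n \<bullet> K n)
      - trace (matrix Dn) * an\<^sup>2 - aT \<bullet> Dn aT"
    unfolding grad_aT tangential_div_K tangential_div_Mt Lf_aT Ba by (simp add: algebra_simps power2_eq_square)
qed

section \<open>Derivatives up to the boundary\<close>

lemma uniform_linearization:
  fixes \<phi> :: "'a::real_normed_vector \<Rightarrow> 'b::real_normed_vector"
  assumes "open V" "x \<in> V" "\<And>y. y \<in> V \<Longrightarrow> (\<phi> has_derivative blinfun_apply (\<phi>' y)) (at y)"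
    and "continuous_on V \<phi>'" "\<eta> > 0"
  obtains \<delta> where "\<delta> > 0" "ball x \<delta> \<subseteq> V"
    "\<And>a b. a \<in> ball x \<delta> \<Longrightarrow> b \<in> ball x \<delta> \<Longrightarrow>
       norm (\<phi> b - \<phi> a - \<phi>' x (b - a)) \<le> \<eta> * norm (b - a)"
proof -
  obtain d1 where d1: "d1 > 0" "\<And>y. y \<in> V \<Longrightarrow> dist y x < d1 \<Longrightarrow> dist (\<phi>' y) (\<phi>' x) < \<eta>"
    using assms(2,4,5) unfolding continuous_on_iff by metis
  obtain d2 where d2: "d2 > 0" "ball x d2 \<subseteq> V"
    using assms(1,2) open_contains_ball by blast
  define \<delta> where "\<delta> = min d1 d2"
  have sub: "ball x \<delta> \<subseteq> V" using d2 unfolding \<delta>_def by auto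
  show thesis
  proof
    show "\<delta> > 0" "ball x \<delta> \<subseteq> V" using d1 d2 sub by (auto simp: \<delta>_def)
    fix a b assume ab: "a \<in> ball x \<delta>" "b \<in> ball x \<delta>"
    have "norm (\<phi> b - \<phi> a - \<phi>' x (b - a)) \<le> norm (b - a) * \<eta>"
    proof (rule differentiable_bound_linearization[where S = "ball x \<delta>"])
      show "a + t *\<^sub>R (b - a) \<in> ball x \<delta>" if "t \<in> {0..1}" for t
        using that ab convex_ball[of x \<delta>] unfolding convex_alt
        by (metis (no_types, lifting) atLeastAtMost_iff diff_add_cancel
            scaleR_collapse scaleR_right_diff_distrib add.commute add_diff_eq)
      show "(\<phi> has_derivative blinfun_apply (\<phi>' y)) (at y within ball x \<delta>)" if "y \<in> ball x \<delta>" for y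
        using assms(3) sub that by (blast intro: has_derivative_at_withinI)
      show "onorm (blinfun_apply (\<phi>' y) - blinfun_apply (\<phi>' x)) \<le> \<eta>" if "y \<in> ball x \<delta>" for y
      proof -
        have "dist (\<phi>' y) (\<phi>' x) < \<eta>"
          using d1(2)[of y] that sub by (auto simp: \<delta>_def dist_commute)
        then show ?thesis
          by (simp add: dist_norm norm_blinfun.rep_eq minus_blinfun.rep_eq fun_diff_def)
      qed
    qed (use \<open>\<delta> > 0\<close> in auto)
    then show "norm (\<phi> b - \<phi> a - \<phi>' x (b - a)) \<le> \<eta> * norm (b - a)"
      by (simp add: mult.commute)
  qed
qed

lemma curve_in_open_with_velocity:
  fixes x v :: "'a::real_normed_vector"
  assumes "open W" "x \<in> W"
  obtains c where "continuous_on UNIV c" "range c \<subseteq> W" "c 0 = x"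
    "(c has_vector_derivative v) (at 0)" "\<And>t. \<exists>s. c t = x + s *\<^sub>R v"
proof -
  obtain r where r: "r > 0" "ball x r \<subseteq> W" using assms open_contains_ball by blast
  define \<epsilon> where "\<epsilon> = r / (2 * (norm v + 1))"
  have "\<epsilon> > 0" using r unfolding \<epsilon>_def by (intro divide_pos_pos) (auto intro: add_nonneg_pos)
  define c where "c t = x + (\<epsilon> * arctan (t / \<epsilon>)) *\<^sub>R v" for t
  have "c t \<in> W" for t
  proof -
    have "\<bar>arctan (t / \<epsilon>)\<bar> < 2"
      using arctan_ubound[of "t / \<epsilon>"] arctan_lbound[of "t / \<epsilon>"] pi_less_4 by linarith
    then have "\<epsilon> * \<bar>arctan (t / \<epsilon>)\<bar> * norm v \<le> \<epsilon> * 2 * norm v"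
      using \<open>\<epsilon> > 0\<close> by (intro mult_right_mono) auto
    also have "\<dots> = r * (norm v / (norm v + 1))"
      using norm_ge_zero[of v] by (simp add: \<epsilon>_def divide_simps)
    also have "\<dots> < r"
      using r by (simp add: pos_divide_less_eq add_nonneg_pos)
    finally have "dist x (c t) < r"
      using \<open>\<epsilon> > 0\<close> by (simp add: c_def dist_norm abs_mult)
    then show ?thesis using r by auto
  qed
  moreover have "(c has_derivative (\<lambda>h. h *\<^sub>R v)) (at 0)"
    unfolding c_def[abs_def] using \<open>\<epsilon> > 0\<close>
    by (auto intro!: derivative_eq_intros simp: field_simps)
  moreover have "continuous_on UNIV c"
    unfolding c_def[abs_def] using \<open>\<epsilon> > 0\<close> by (intro continuous_intros) auto
  ultimately show thesis
    by (intro that) (auto simp: c_def has_vector_derivative_def)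
qed

lemma linearization_bound_open_segment:
  fixes u :: "'a::real_normed_vector \<Rightarrow> 'b::real_inner"
  assumes cont: "continuous_on (closed_segment a b) u"
    and der: "\<And>w. w \<in> open_segment a b \<Longrightarrow> (u has_derivative blinfun_apply (Du w)) (at w)"
    and bound: "\<And>w. w \<in> open_segment a b \<Longrightarrow> norm (Du w - L) \<le> \<epsilon>"
  shows "norm (u b - u a - L (b - a)) \<le> \<epsilon> * norm (b - a)"
proof (cases "a = b")
  case False
  define l where "l t = a + t *\<^sub>R (b - a)" for t :: real
  define f where "f = (\<lambda>t. u (l t) - L (l t))"
  have l_closed: "l t \<in> closed_segment a b" if "t \<in> {0..1}" for t
    using that unfolding l_def closed_segment_def
    by (auto intro!: exI[of _ t] simp: algebra_simps)
  have l_open: "l t \<in> open_segment a b" if "0 < t" "t < 1" for t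
    using that False unfolding l_def in_segment
    by (auto intro!: exI[of _ t] simp: algebra_simps)
  have "continuous_on {0..1} f"
    unfolding f_def l_def
    by (intro continuous_intros continuous_on_compose2[OF cont]
        continuous_on_compose2[OF blinfun.bounded_linear_right[THEN linear_continuous_on]])
       (use l_closed in \<open>auto simp: l_def\<close>)
  moreover have "(f has_derivative (\<lambda>s. Du (l t) (s *\<^sub>R (b - a)) - L (s *\<^sub>R (b - a)))) (at t)"
    if "0 < t" "t < 1" for t
  proof -
    have "(l has_derivative (\<lambda>s. s *\<^sub>R (b - a))) (at t)"
      unfolding l_def by (auto intro!: derivative_eq_intros)
    from diff_chain_at[OF this der[OF l_open[OF that]]]
    have "((u \<circ> l) has_derivative (\<lambda>s. Du (l t) (s *\<^sub>R (b - a)))) (at t)"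
      by (simp add: o_def)
    moreover have "((L \<circ> l) has_derivative (\<lambda>s. L (s *\<^sub>R (b - a)))) (at t)"
      using bounded_linear.has_derivative[OF blinfun.bounded_linear_right \<open>(l has_derivative _) _\<close>]
      by (simp add: o_def)
    ultimately have "((\<lambda>t. (u \<circ> l) t - (L \<circ> l) t) has_derivative
        (\<lambda>s. Du (l t) (s *\<^sub>R (b - a)) - L (s *\<^sub>R (b - a)))) (at t)"
      by (rule has_derivative_diff)
    then show ?thesis by (simp add: f_def o_def)
  qed
  ultimately obtain t where t: "0 < t" "t < 1"
    and mvt: "norm (f 1 - f 0) \<le> norm (Du (l t) (b - a) - L (b - a))"
    using mvt_general[of 0 1 f] by force
  have "norm (Du (l t) (b - a) - L (b - a)) = norm ((Du (l t) - L) (b - a))"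
    by (simp add: blinfun.diff_left)
  also have "\<dots> \<le> norm (Du (l t) - L) * norm (b - a)"
    by (rule norm_blinfun)
  also have "\<dots> \<le> \<epsilon> * norm (b - a)"
    using bound[OF l_open[OF t]] by (simp add: mult_right_mono)
  finally have "norm (f 1 - f 0) \<le> \<epsilon> * norm (b - a)"
    using mvt by linarith
  moreover have "f 1 - f 0 = u b - u a - L (b - a)"
    by (simp add: f_def l_def blinfun.diff_right)
  ultimately show ?thesis by simp
qed simp

lemma linearization_bound_polygon:
  fixes u :: "'a::real_normed_vector \<Rightarrow> 'b::real_inner"
  assumes cont: "continuous_on (closed_segment p a \<union> closed_segment a b \<union> closed_segment b y) u"
    and der: "\<And>w. w \<in> open_segment p a \<union> open_segment a b \<union> open_segment b y \<Longrightarrow>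
      (u has_derivative blinfun_apply (Du w)) (at w) \<and> norm (Du w - L) \<le> \<epsilon>"
  shows "norm (u y - u p - L (y - p)) \<le> \<epsilon> * (dist a p + dist b a + dist y b)"
proof -
  have piece: "norm (u w - u v - L (w - v)) \<le> \<epsilon> * dist w v"
    if "closed_segment v w \<subseteq> closed_segment p a \<union> closed_segment a b \<union> closed_segment b y"
      "open_segment v w \<subseteq> open_segment p a \<union> open_segment a b \<union> open_segment b y" for v w
    unfolding dist_norm
    by (rule linearization_bound_open_segment[OF continuous_on_subset[OF cont that(1)]])
       (use der that(2) in blast)+
  have pa: "norm (u a - u p - L (a - p)) \<le> \<epsilon> * dist a p" by (rule piece) auto
  have ab: "norm (u b - u a - L (b - a)) \<le> \<epsilon> * dist b a" by (rule piece) auto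
  have "norm (u y - u b - L (y - b)) \<le> \<epsilon> * dist y b" by (rule piece) auto
  moreover have "u y - u p - L (y - p) =
      (u a - u p - L (a - p)) + (u b - u a - L (b - a)) + (u y - u b - L (y - b))"
    by (simp add: blinfun.diff_right algebra_simps)
  then have "norm (u y - u p - L (y - p)) \<le> norm (u a - u p - L (a - p))
      + norm (u b - u a - L (b - a)) + norm (u y - u b - L (y - b))"
    by (metis norm_triangle_le add_right_mono norm_triangle_ineq)
  ultimately show ?thesis using pa ab by (simp add: distrib_left)
qed

lemma polygon_subset_cball:
  fixes p a b y :: "'a::real_normed_vector"
  assumes "dist a p + dist b a \<le> R" "dist y p \<le> R"
  shows "closed_segment p a \<union> closed_segment a b \<union> closed_segment b y \<subseteq> cball p R"
proof -
  have "dist a p \<le> R" "dist b p \<le> R" "0 \<le> R"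
    using assms dist_triangle[of b p a] zero_le_dist[of b a] zero_le_dist[of y p] by linarith+
  then have "{p, a, b, y} \<subseteq> cball p R" using assms(2) by (auto simp: dist_commute)
  then show ?thesis by (simp add: closed_segment_subset)
qed

lemma has_derivative_within_closure_polygonal:
  fixes u :: "'a::real_normed_vector \<Rightarrow> 'b::real_inner"
  assumes ucont: "continuous_on (closure \<Omega>) u"
    and uder: "\<And>x. x \<in> \<Omega> \<Longrightarrow> (u has_derivative blinfun_apply (Du x)) (at x)"
    and Dcont: "continuous_on (closure \<Omega>) Du"
    and p: "p \<in> closure \<Omega>" and r: "r > 0"
    and access: "\<And>y. y \<in> closure \<Omega> \<Longrightarrow> 0 < dist y p \<Longrightarrow> dist y p < r \<Longrightarrow>
       \<exists>a b. open_segment p a \<union> closed_segment a b \<union> open_segment b y \<subseteq> \<Omega> \<and>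
             dist a p + dist b a + dist y b \<le> C * dist y p"
  shows "(u has_derivative blinfun_apply (Du p)) (at p within closure \<Omega>)"
  unfolding has_derivative_within_alt
proof (intro conjI allI impI)
  show "bounded_linear (blinfun_apply (Du p))" by (rule blinfun.bounded_linear_right)
  fix e :: real assume "e > 0"
  define \<epsilon> where "\<epsilon> = e / (\<bar>C\<bar> + 1)"
  have "\<epsilon> > 0" using \<open>e > 0\<close> by (simp add: \<epsilon>_def)
  then obtain \<rho> where "\<rho> > 0"
    and \<rho>: "\<And>w. w \<in> closure \<Omega> \<Longrightarrow> dist w p < \<rho> \<Longrightarrow> dist (Du w) (Du p) < \<epsilon>"
    using Dcont p unfolding continuous_on_iff by metis
  define d where "d = min r (\<rho> / (\<bar>C\<bar> + 1))"
  show "\<exists>d>0. \<forall>y\<in>closure \<Omega>. norm (y - p) < d \<longrightarrow>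
          norm (u y - u p - Du p (y - p)) \<le> e * norm (y - p)"
  proof (intro exI[of _ d] conjI ballI impI)
    show "d > 0" using r \<open>\<rho> > 0\<close> by (simp add: d_def)
    fix y assume y: "y \<in> closure \<Omega>" "norm (y - p) < d"
    show "norm (u y - u p - Du p (y - p)) \<le> e * norm (y - p)"
    proof (cases "y = p")
      case False
      define s where "s = dist y p"
      define R where "R = (\<bar>C\<bar> + 1) * s"
      have s: "0 < s" "s < r" "R < \<rho>"
        using False y by (auto simp: s_def R_def d_def dist_norm field_simps)
      obtain a b where path: "open_segment p a \<union> closed_segment a b \<union> open_segment b y \<subseteq> \<Omega>"
        and len: "dist a p + dist b a + dist y b \<le> C * s"
        using access[OF y(1)] s by (auto simp: s_def)
      have "a \<in> \<Omega>" "b \<in> \<Omega>" using path by auto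
      define P where "P = closed_segment p a \<union> closed_segment a b \<union> closed_segment b y"
      have open_in: "open_segment p a \<union> open_segment a b \<union> open_segment b y \<subseteq> \<Omega>"
        using path segment_open_subset_closed[of a b] by blast
      then have "P \<subseteq> closure \<Omega>"
        using closure_subset[of \<Omega>] p y(1) \<open>a \<in> \<Omega>\<close> \<open>b \<in> \<Omega>\<close>
        by (auto simp: P_def closed_segment_eq_open)
      have "C * s \<le> \<bar>C\<bar> * s" "0 \<le> \<bar>C\<bar> * s" using s by (simp_all add: mult_right_mono)
      moreover have "R = \<bar>C\<bar> * s + s" by (simp add: R_def algebra_simps)
      ultimately have len_R: "dist a p + dist b a + dist y b \<le> R" "dist a p + dist b a \<le> R"
        and "dist y p \<le> R"
        using len s zero_le_dist[of y b] unfolding s_def by linarith+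
      then have "P \<subseteq> cball p R"
        using polygon_subset_cball[OF len_R(2)] by (simp add: P_def)
      have "norm (u y - u p - Du p (y - p)) \<le> \<epsilon> * (dist a p + dist b a + dist y b)"
      proof (rule linearization_bound_polygon)
        show "continuous_on (closed_segment p a \<union> closed_segment a b \<union> closed_segment b y) u"
          using continuous_on_subset[OF ucont \<open>P \<subseteq> closure \<Omega>\<close>] by (simp add: P_def)
        fix w assume w: "w \<in> open_segment p a \<union> open_segment a b \<union> open_segment b y"
        then have "w \<in> \<Omega>" using open_in by blast
        have "w \<in> P"
          using w segment_open_subset_closed[of p a] segment_open_subset_closed[of a b]
            segment_open_subset_closed[of b y] unfolding P_def by blast
        then have "dist w p < \<rho>" using \<open>P \<subseteq> cball p R\<close> \<open>R < \<rho>\<close> by (auto simp: dist_commute)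
        then have "norm (Du w - Du p) < \<epsilon>"
          using \<rho>[of w] \<open>w \<in> \<Omega>\<close> closure_subset[of \<Omega>] by (auto simp: dist_norm)
        then show "(u has_derivative blinfun_apply (Du w)) (at w) \<and> norm (Du w - Du p) \<le> \<epsilon>"
          using uder[OF \<open>w \<in> \<Omega>\<close>] by simp
      qed
      also have "\<dots> \<le> \<epsilon> * R"
        using len_R \<open>\<epsilon> > 0\<close> by (simp add: mult_left_mono)
      also have "\<dots> = e * norm (y - p)"
        using abs_ge_zero[of C] by (simp add: \<epsilon>_def R_def s_def dist_norm add_nonneg_eq_0_iff)
      finally show ?thesis .
    qed simp
  qed
qed

section \<open>Calculus along a surface\<close>

lemma surface_curve_chain:
  fixes F :: "real^3 \<Rightarrow> 'b::real_normed_vector"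
  assumes F: "(F has_derivative L) (at p within S)" and \<gamma>: "surface_curve S p \<gamma> v"
  shows "((F \<circ> \<gamma>) has_vector_derivative L v) (at 0)"
proof -
  have \<gamma>': "range \<gamma> \<subseteq> S" "\<gamma> 0 = p" "(\<gamma> has_derivative (\<lambda>h. h *\<^sub>R v)) (at 0)"
    using \<gamma> unfolding surface_curve_def has_vector_derivative_def by auto
  have "(F has_derivative L) (at (\<gamma> 0) within range \<gamma>)"
    using has_derivative_subset[OF F \<gamma>'(1)] \<gamma>'(2) by simp
  from diff_chain_within[OF \<gamma>'(3) this]
  have "((F \<circ> \<gamma>) has_derivative (L \<circ> (\<lambda>h. h *\<^sub>R v))) (at 0)" by simp
  moreover have "L \<circ> (\<lambda>h. h *\<^sub>R v) = (\<lambda>h. h *\<^sub>R L v)"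
    using has_derivative_linear[OF F] by (auto simp: linear_scale)
  ultimately show ?thesis by (simp add: has_vector_derivative_def)
qed

lemma surface_curve_chain_real:
  fixes F :: "real^3 \<Rightarrow> real"
  assumes "(F has_derivative L) (at p within S)" and "surface_curve S p \<gamma> v"
  shows "((F \<circ> \<gamma>) has_real_derivative L v) (at 0)"
  using surface_curve_chain[OF assms] by (simp add: has_real_derivative_iff_has_vector_derivative)

lemma surface_grad_eq:
  fixes F :: "real^3 \<Rightarrow> real"
  assumes T: "tangent_space S p = {v. n \<bullet> v = 0}" and n: "norm n = 1"
    and F: "(F has_derivative L) (at p within S)"
  shows "surface_grad S F p = grad_of L - (grad_of L \<bullet> n) *\<^sub>R n"
proof -
  define g where "g = grad_of L - (grad_of L \<bullet> n) *\<^sub>R n"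
  have nn: "n \<bullet> n = 1" using n by (simp add: norm_eq_1)
  have g_tangent: "n \<bullet> g = 0"
    using nn by (simp add: g_def inner_diff_right inner_commute)
  have g_L: "g \<bullet> v = L v" if "n \<bullet> v = 0" for v
  proof -
    have "g \<bullet> v = grad_of L \<bullet> v - (grad_of L \<bullet> n) * (n \<bullet> v)"
      by (simp add: g_def inner_diff_left)
    then show ?thesis
      using that linear_eq_inner_grad_of[OF has_derivative_linear[OF F], of v] by simp
  qed
  have curve_deriv: "((F \<circ> \<gamma>) has_real_derivative g \<bullet> v) (at 0)" if "surface_curve S p \<gamma> v" for \<gamma> v
  proof -
    have "v \<in> tangent_space S p" using that unfolding tangent_space_def by blast
    then show ?thesis using surface_curve_chain_real[OF F that] g_L T by simp
  qed
  show ?thesis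
    unfolding surface_grad_def g_def[symmetric]
  proof (rule the_equality)
    show "g \<in> tangent_space S p \<and>
        (\<forall>\<gamma> v. surface_curve S p \<gamma> v \<longrightarrow> ((F \<circ> \<gamma>) has_real_derivative g \<bullet> v) (at 0))"
      using T g_tangent curve_deriv by simp
  next
    fix g' assume g': "g' \<in> tangent_space S p \<and>
        (\<forall>\<gamma> v. surface_curve S p \<gamma> v \<longrightarrow> ((F \<circ> \<gamma>) has_real_derivative g' \<bullet> v) (at 0))"
    define w where "w = g' - g"
    have "w \<in> tangent_space S p"
      using g' T g_tangent by (simp add: w_def inner_diff_right)
    then obtain \<gamma> where \<gamma>: "surface_curve S p \<gamma> w" unfolding tangent_space_def by blast
    have "g' \<bullet> w = g \<bullet> w"
      using DERIV_unique g' curve_deriv[OF \<gamma>] \<gamma> by blast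
    then have "w \<bullet> w = 0" by (simp add: w_def inner_diff_left)
    then show "g' = g" by (simp add: w_def)
  qed
qed

lemma surface_div_eq:
  fixes F :: "real^3 \<Rightarrow> real^3"
  assumes T: "tangent_space S p = {v. n \<bullet> v = 0}" and n: "norm n = 1"
    and F: "(F has_derivative M) (at p within S)"
  shows "surface_div S F p = trace (matrix M) - n \<bullet> M n"
proof -
  have lin: "linear M" by (rule has_derivative_linear[OF F])
  have grad_i: "grad_of (\<lambda>v. M v $ i) = (\<chi> j. M (axis j 1) $ i)" for i
    by (simp add: grad_of_def)
  have comp_i: "grad_of (\<lambda>v. M v $ i) \<bullet> n = M n $ i" for i
    using linear_eq_inner_grad_of[of "\<lambda>v. M v $ i" n] lin by (simp add: linear_iff)
  have "surface_div S F p = (\<Sum>i\<in>UNIV. (grad_of (\<lambda>v. M v $ i) - (M n $ i) *\<^sub>R n) $ i)"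
    unfolding surface_div_def
    using surface_grad_eq[OF T n bounded_linear.has_derivative[OF bounded_linear_vec_nth F]] comp_i
    by simp
  also have "\<dots> = trace (matrix M) - n \<bullet> M n"
    by (simp add: trace_matrix grad_i sum_subtractf inner_vec_def mult.commute)
  finally show ?thesis .
qed

lemma surface_grad_cong:
  fixes F H :: "real^3 \<Rightarrow> real"
  assumes T: "tangent_space S p = {v. n \<bullet> v = 0}" and n: "norm n = 1"
    and F: "(F has_derivative LF) (at p within S)" and H: "(H has_derivative LH) (at p within S)"
    and curves: "\<And>v. n \<bullet> v = 0 \<Longrightarrow> \<exists>\<gamma>. surface_curve S p \<gamma> v \<and> (\<forall>t. F (\<gamma> t) = H (\<gamma> t))"
  shows "surface_grad S F p = surface_grad S H p"
proof -
  have nn: "n \<bullet> n = 1" using n by (simp add: norm_eq_1)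
  have LF_LH: "LF v = LH v" if v: "n \<bullet> v = 0" for v
  proof -
    obtain \<gamma> where \<gamma>: "surface_curve S p \<gamma> v" "\<forall>t. F (\<gamma> t) = H (\<gamma> t)"
      using curves[OF v] by blast
    then have "F \<circ> \<gamma> = H \<circ> \<gamma>" by auto
    then show ?thesis
      using DERIV_unique[OF surface_curve_chain_real[OF F \<gamma>(1)]]
        surface_curve_chain_real[OF H \<gamma>(1)] by simp
  qed
  define D where "D = grad_of LF - grad_of LH"
  have D_orth: "D \<bullet> v = 0" if "n \<bullet> v = 0" for v
    using LF_LH[OF that] linear_eq_inner_grad_of[OF has_derivative_linear[OF F], of v]
      linear_eq_inner_grad_of[OF has_derivative_linear[OF H], of v]
    by (simp add: D_def inner_diff_left)
  define P where "P = D - (D \<bullet> n) *\<^sub>R n"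
  have "n \<bullet> P = 0" using nn by (simp add: P_def inner_diff_right inner_commute)
  then have "D \<bullet> P = 0" "n \<bullet> P = 0" using D_orth by auto
  then have "P \<bullet> P = 0" by (simp add: P_def inner_diff_left)
  then have "P = 0" by simp
  then have "grad_of LF - (grad_of LF \<bullet> n) *\<^sub>R n = grad_of LH - (grad_of LH \<bullet> n) *\<^sub>R n"
    by (simp add: P_def D_def inner_diff_left algebra_simps)
  then show ?thesis
    using surface_grad_eq[OF T n F] surface_grad_eq[OF T n H] by simp
qed

lemma surface_div_cong:
  fixes F H :: "real^3 \<Rightarrow> real^3"
  assumes T: "tangent_space S p = {v. n \<bullet> v = 0}" and n: "norm n = 1"
    and F: "(F has_derivative MF) (at p within S)" and H: "(H has_derivative MH) (at p within S)"
    and curves: "\<And>v. n \<bullet> v = 0 \<Longrightarrow> \<exists>\<gamma>. surface_curve S p \<gamma> v \<and> (\<forall>t. F (\<gamma> t) = H (\<gamma> t))"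
  shows "surface_div S F p = surface_div S H p"
  unfolding surface_div_def
proof (rule sum.cong[OF refl])
  fix i
  have "surface_grad S (\<lambda>x. F x $ i) p = surface_grad S (\<lambda>x. H x $ i) p"
    by (rule surface_grad_cong[OF T n bounded_linear.has_derivative[OF bounded_linear_vec_nth F]
          bounded_linear.has_derivative[OF bounded_linear_vec_nth H]])
       (use curves in metis)
  then show "surface_grad S (\<lambda>x. F x $ i) p $ i = surface_grad S (\<lambda>x. H x $ i) p $ i" by simp
qed

lemma surface_curve_eventually_in:
  assumes "surface_curve S p \<gamma> v" "open W" "p \<in> W"
  shows "\<forall>\<^sub>F t in at 0. \<gamma> t \<in> W"
proof -
  have "isCont \<gamma> 0" "\<gamma> 0 = p"
    using assms(1) has_vector_derivative_continuous by (auto simp: surface_curve_def)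
  then have "(\<gamma> \<longlongrightarrow> p) (at 0)" by (simp add: isCont_def)
  then show ?thesis using assms(2,3) by (rule topological_tendstoD)
qed

lemma divergence_eq_trace: "divergence D = trace (matrix (blinfun_apply D))"
  by (simp add: divergence_def trace_matrix)

lemma divergence_zero_on_closure:
  assumes "C1_up_to_boundary \<Omega> u Du" "\<forall>x\<in>\<Omega>. divergence (Du x) = 0" "p \<in> closure \<Omega>"
  shows "divergence (Du p) = 0"
proof (rule continuous_constant_on_closure[where f = "\<lambda>x. divergence (Du x)", OF _ _ assms(3)])
  show "continuous_on (closure \<Omega>) (\<lambda>x. divergence (Du x))"
    using assms(1) unfolding divergence_def C1_up_to_boundary_def by (intro continuous_intros) auto
qed (use assms(2) in auto)

section \<open>Boundary charts\<close>

locale boundary_chart =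
  fixes \<Omega> V :: "(real^3) set" and \<phi> :: "real^3 \<Rightarrow> real" and \<phi>' :: "real^3 \<Rightarrow> ((real^3) \<Rightarrow>\<^sub>L real)"
  assumes open_V: "open V"
    and \<phi>_deriv: "\<And>x. x \<in> V \<Longrightarrow> (\<phi> has_derivative blinfun_apply (\<phi>' x)) (at x)"
    and \<phi>'_differentiable: "\<And>x. x \<in> V \<Longrightarrow> \<phi>' differentiable (at x)"
    and \<phi>'_nonzero: "\<And>x. x \<in> V \<Longrightarrow> \<phi>' x \<noteq> 0"
    and interior_chart: "\<Omega> \<inter> V = {x\<in>V. \<phi> x < 0}"
    and frontier_chart: "frontier \<Omega> \<inter> V = {x\<in>V. \<phi> x = 0}"
begin

definition grad_phi :: "real^3 \<Rightarrow> real^3" where "grad_phi x = grad_of (\<phi>' x)"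

definition nu :: "real^3 \<Rightarrow> real^3" where "nu x = grad_phi x /\<^sub>R norm (grad_phi x)"

lemma \<phi>'_eq_inner_grad_phi: "\<phi>' x v = grad_phi x \<bullet> v"
  unfolding grad_phi_def by (rule linear_eq_inner_grad_of[OF bounded_linear.linear[OF blinfun.bounded_linear_right]])

lemma grad_phi_nonzero: "x \<in> V \<Longrightarrow> grad_phi x \<noteq> 0"
  using \<phi>'_nonzero by (metis blinfun_eqI \<phi>'_eq_inner_grad_phi inner_zero_left zero_blinfun.rep_eq)

lemma norm_nu: "x \<in> V \<Longrightarrow> norm (nu x) = 1"
  using grad_phi_nonzero by (simp add: nu_def)

lemma nu_orthogonal_iff: "x \<in> V \<Longrightarrow> nu x \<bullet> v = 0 \<longleftrightarrow> \<phi>' x v = 0"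
  using grad_phi_nonzero by (simp add: nu_def \<phi>'_eq_inner_grad_phi)

lemma continuous_on_\<phi>': "continuous_on V \<phi>'"
  using \<phi>'_differentiable
  by (meson continuous_at_imp_continuous_on differentiable_imp_continuous_within)

lemma in_interior_chart_iff: "x \<in> V \<Longrightarrow> x \<in> \<Omega> \<longleftrightarrow> \<phi> x < 0"
  using interior_chart by blast

lemma in_frontier_chart_iff: "x \<in> V \<Longrightarrow> x \<in> frontier \<Omega> \<longleftrightarrow> \<phi> x = 0"
  using frontier_chart by blast

lemma in_closure_chart_iff: "x \<in> V \<Longrightarrow> x \<in> closure \<Omega> \<longleftrightarrow> \<phi> x \<le> 0"
  using closure_Un_frontier[of \<Omega>] in_interior_chart_iff[of x] in_frontier_chart_iff[of x] by auto

text \<open>g is the local inverse of y \<mapsto> y + (\<phi> y - \<phi> x - \<phi>' x (y - x)) m with \<phi>' x m = 1,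
  whose derivative at x is the identity.\<close>

lemma straightening_map:
  assumes x: "x \<in> V"
  obtains W g where "open W" "x \<in> W" "g x = x" "continuous_on W g" "(g has_derivative id) (at x)"
    "\<And>y. y \<in> W \<Longrightarrow> g y \<in> V" "\<And>y. y \<in> W \<Longrightarrow> \<phi> (g y) = \<phi> x + \<phi>' x (y - x)"
proof -
  define m where "m = grad_phi x /\<^sub>R (grad_phi x \<bullet> grad_phi x)"
  have \<phi>'_m: "\<phi>' x m = 1"
    using grad_phi_nonzero[OF x] by (simp add: m_def \<phi>'_eq_inner_grad_phi)
  define F where "F y = y + (\<phi> y - \<phi> x - \<phi>' x (y - x)) *\<^sub>R m" for y
  define F' where "F' y = id_blinfun + (blinfun_scaleR_left m o\<^sub>L (\<phi>' y - \<phi>' x))" for y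
  have F_deriv: "(F has_derivative blinfun_apply (F' y)) (at y)" if "y \<in> V" for y
    unfolding F_def[abs_def] F'_def
    using \<phi>_deriv[OF that]
    by (auto intro!: derivative_eq_intros
        simp: fun_eq_iff blinfun.add_left blinfun.diff_left blinfun.diff_right)
  have "continuous_on V F'"
    unfolding F'_def by (intro continuous_intros continuous_on_\<phi>')
  moreover have "id_blinfun o\<^sub>L F' x = id_blinfun"
    by (simp add: F'_def blinfun_eqI)
  ultimately obtain U W g g' where UW: "open W" "U \<subseteq> V" "x \<in> U" "F x \<in> W"
      and hom: "homeomorphism U W F g"
      and g_deriv: "\<And>y. y \<in> W \<Longrightarrow> (g has_derivative g' y) (at y)"
      and g': "\<And>y. y \<in> W \<Longrightarrow> g' y = inv (blinfun_apply (F' (g y)))"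
    using inverse_function_theorem[OF open_V F_deriv _ x] by metis
  have Fx: "F x = x" by (simp add: F_def)
  have gx: "g x = x" using hom UW(3) Fx by (metis homeomorphism_apply1)
  show thesis
  proof
    show "open W" "x \<in> W" "g x = x" using UW Fx gx by simp_all
    show "continuous_on W g" using hom by (simp add: homeomorphism_def)
    show "(g has_derivative id) (at x)"
      using g_deriv[of x] g'[of x] UW(4) by (simp add: Fx gx F'_def id_def)
    fix y assume "y \<in> W"
    then show "g y \<in> V" using hom UW(2) by (auto simp: homeomorphism_def)
    have "grad_phi x \<bullet> F (g y) = grad_phi x \<bullet> y"
      using hom \<open>y \<in> W\<close> by (simp add: homeomorphism_apply2)
    then show "\<phi> (g y) = \<phi> x + \<phi>' x (y - x)"
      using \<phi>'_m by (simp add: F_def \<phi>'_eq_inner_grad_phi inner_add_right inner_diff_right)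
  qed
qed

lemma boundary_curve_with_velocity:
  assumes x: "x \<in> frontier \<Omega>" "x \<in> V" and v: "\<phi>' x v = 0"
  obtains \<gamma> where "surface_curve (frontier \<Omega>) x \<gamma> v"
    "range \<gamma> \<subseteq> connected_component_set (frontier \<Omega>) x"
proof -
  obtain W g where W: "open W" "x \<in> W" "g x = x" "continuous_on W g" "(g has_derivative id) (at x)"
    and g_V: "\<And>y. y \<in> W \<Longrightarrow> g y \<in> V" and g_\<phi>: "\<And>y. y \<in> W \<Longrightarrow> \<phi> (g y) = \<phi> x + \<phi>' x (y - x)"
    using straightening_map[OF x(2)] by blast
  obtain c where c: "continuous_on UNIV c" "range c \<subseteq> W" "c 0 = x" "(c has_vector_derivative v) (at 0)"
    and c_line: "\<And>t. \<exists>s. c t = x + s *\<^sub>R v"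
    using curve_in_open_with_velocity[OF W(1,2)] by blast
  define \<gamma> where "\<gamma> = g \<circ> c"
  have \<gamma>_frontier: "\<gamma> t \<in> frontier \<Omega>" for t
  proof -
    have "c t \<in> W" using c(2) by blast
    obtain s where "c t = x + s *\<^sub>R v" using c_line by blast
    then have "\<phi> (\<gamma> t) = 0"
      using g_\<phi>[OF \<open>c t \<in> W\<close>] x v in_frontier_chart_iff by (simp add: \<gamma>_def blinfun.scaleR_right)
    then show ?thesis using g_V[OF \<open>c t \<in> W\<close>] in_frontier_chart_iff by (simp add: \<gamma>_def)
  qed
  have "\<gamma> 0 = x" by (simp add: \<gamma>_def c(3) W(3))
  have "(\<gamma> has_vector_derivative v) (at 0)"
    using diff_chain_at[OF c(4)[unfolded has_vector_derivative_def]] W(5) c(3)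
    by (simp add: \<gamma>_def has_vector_derivative_def o_def id_def)
  then have "surface_curve (frontier \<Omega>) x \<gamma> v"
    using \<gamma>_frontier \<open>\<gamma> 0 = x\<close> by (auto simp: surface_curve_def)
  moreover have "continuous_on UNIV \<gamma>"
    unfolding \<gamma>_def by (rule continuous_on_compose[OF c(1) continuous_on_subset[OF W(4) c(2)]])
  then have "range \<gamma> \<subseteq> connected_component_set (frontier \<Omega>) x"
    using \<gamma>_frontier \<open>\<gamma> 0 = x\<close>
    by (intro connected_component_maximal connected_continuous_image) (auto intro: range_eqI)
  ultimately show thesis by (rule that)
qed

lemma tangent_space_chart:
  assumes x: "x \<in> frontier \<Omega>" "x \<in> V"
  shows "tangent_space (frontier \<Omega>) x = {v. nu x \<bullet> v = 0}"
proof
  show "{v. nu x \<bullet> v = 0} \<subseteq> tangent_space (frontier \<Omega>) x"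
  proof
    fix v assume "v \<in> {v. nu x \<bullet> v = 0}"
    then have "\<phi>' x v = 0" using nu_orthogonal_iff[OF x(2)] by simp
    then obtain \<gamma> where "surface_curve (frontier \<Omega>) x \<gamma> v"
      using boundary_curve_with_velocity[OF x] by metis
    then show "v \<in> tangent_space (frontier \<Omega>) x" by (auto simp: tangent_space_def)
  qed
  show "tangent_space (frontier \<Omega>) x \<subseteq> {v. nu x \<bullet> v = 0}"
  proof
    fix v assume "v \<in> tangent_space (frontier \<Omega>) x"
    then obtain \<gamma> where \<gamma>: "surface_curve (frontier \<Omega>) x \<gamma> v"
      unfolding tangent_space_def by blast
    have \<gamma>_frontier: "range \<gamma> \<subseteq> frontier \<Omega>" and "\<gamma> 0 = x"
      using \<gamma> by (auto simp: surface_curve_def)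
    have "\<forall>\<^sub>F t in at 0. \<gamma> t \<in> V"
      by (rule surface_curve_eventually_in[OF \<gamma> open_V x(2)])
    then have ev: "\<forall>\<^sub>F t in at 0. (\<phi> \<circ> \<gamma>) t = 0"
      by (rule eventually_mono) (use \<gamma>_frontier in_frontier_chart_iff in auto)
    have "((\<phi> \<circ> \<gamma>) has_vector_derivative \<phi>' x v) (at 0)"
      using surface_curve_chain[OF has_derivative_at_withinI[OF \<phi>_deriv[OF x(2)]] \<gamma>] .
    moreover note ev
    moreover have "(\<phi> \<circ> \<gamma>) 0 = 0"
      using \<open>\<gamma> 0 = x\<close> x in_frontier_chart_iff by simp
    ultimately have "((\<lambda>_. 0) has_vector_derivative \<phi>' x v) (at 0)"
      unfolding has_vector_derivative_def
      by (rule has_derivative_transform_eventually) auto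
    then have "\<phi>' x v = 0"
      using vector_derivative_unique_at has_vector_derivative_const by blast
    then show "v \<in> {v. nu x \<bullet> v = 0}" using nu_orthogonal_iff[OF x(2)] by simp
  qed
qed

lemma nu_points_outward:
  assumes x: "x \<in> frontier \<Omega>" "x \<in> V"
  shows "\<exists>e>0. \<forall>t. 0 < t \<and> t < e \<longrightarrow> x + t *\<^sub>R nu x \<notin> closure \<Omega> \<and> x - t *\<^sub>R nu x \<in> \<Omega>"
proof -
  define n where "n = nu x"
  have n1: "norm n = 1" using norm_nu[OF x(2)] by (simp add: n_def)
  have \<phi>x: "\<phi> x = 0" using x in_frontier_chart_iff by simp
  have der: "((\<lambda>t. \<phi> (x + t *\<^sub>R n)) has_real_derivative \<phi>' x n) (at 0)"
  proof -
    have "((\<lambda>t. x + t *\<^sub>R n) has_derivative (\<lambda>h. h *\<^sub>R n)) (at 0)"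
      by (auto intro!: derivative_eq_intros)
    from diff_chain_at[OF this] \<phi>_deriv[OF x(2)]
    have "((\<phi> \<circ> (\<lambda>t. x + t *\<^sub>R n)) has_derivative (\<lambda>h. \<phi>' x (h *\<^sub>R n))) (at 0)"
      by (simp add: o_def)
    moreover have "(\<lambda>h. \<phi>' x (h *\<^sub>R n)) = (*) (\<phi>' x n)"
      by (simp add: fun_eq_iff blinfun.scaleR_right)
    ultimately show ?thesis by (simp add: has_field_derivative_def o_def)
  qed
  have pos: "\<phi>' x n > 0"
    using grad_phi_nonzero[OF x(2)] by (simp add: n_def nu_def \<phi>'_eq_inner_grad_phi)
  obtain d1 where "d1 > 0" and up: "\<And>t. 0 < t \<Longrightarrow> t < d1 \<Longrightarrow> \<phi> (x + t *\<^sub>R n) > 0"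
    using DERIV_pos_inc_right[OF der pos] \<phi>x by auto
  obtain d2 where "d2 > 0" and down: "\<And>t. 0 < t \<Longrightarrow> t < d2 \<Longrightarrow> \<phi> (x - t *\<^sub>R n) < 0"
    using DERIV_pos_inc_left[OF der pos] \<phi>x by auto
  obtain r where "r > 0" "ball x r \<subseteq> V" using open_V x(2) open_contains_ball by blast
  define e where "e = min r (min d1 d2)"
  have e: "e > 0" using \<open>r > 0\<close> \<open>d1 > 0\<close> \<open>d2 > 0\<close> by (simp add: e_def)
  have "x + t *\<^sub>R n \<notin> closure \<Omega> \<and> x - t *\<^sub>R n \<in> \<Omega>" if "0 < t" "t < e" for t
  proof -
    have "x + t *\<^sub>R n \<in> V" "x - t *\<^sub>R n \<in> V"
      using that n1 \<open>ball x r \<subseteq> V\<close> by (auto simp: e_def dist_norm)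
    moreover have "\<phi> (x + t *\<^sub>R n) > 0" "\<phi> (x - t *\<^sub>R n) < 0"
      using that up down by (auto simp: e_def)
    ultimately show ?thesis
      using in_closure_chart_iff in_interior_chart_iff by auto
  qed
  then show ?thesis using e by (auto simp: n_def)
qed

lemma outward_normal_chart:
  assumes x: "x \<in> frontier \<Omega>" "x \<in> V"
  shows "outward_normal \<Omega> x = nu x"
proof -
  define n where "n = nu x"
  have n1: "norm n = 1" using norm_nu[OF x(2)] by (simp add: n_def)
  obtain e where e: "e > 0"
    and sides: "\<And>t. 0 < t \<Longrightarrow> t < e \<Longrightarrow> x + t *\<^sub>R n \<notin> closure \<Omega> \<and> x - t *\<^sub>R n \<in> \<Omega>"
    using nu_points_outward[OF x] by (auto simp: n_def)
  show ?thesis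
    unfolding outward_normal_def n_def[symmetric]
  proof (rule the_equality)
    show "norm n = 1 \<and> (\<forall>v\<in>tangent_space (frontier \<Omega>) x. n \<bullet> v = 0) \<and>
        (\<exists>e>0. \<forall>t. 0 < t \<and> t < e \<longrightarrow> x + t *\<^sub>R n \<notin> closure \<Omega> \<and> x - t *\<^sub>R n \<in> \<Omega>)"
      using n1 tangent_space_chart[OF x] sides e by (auto simp: n_def)
  next
    fix m assume m: "norm m = 1 \<and> (\<forall>v\<in>tangent_space (frontier \<Omega>) x. m \<bullet> v = 0) \<and>
        (\<exists>e>0. \<forall>t. 0 < t \<and> t < e \<longrightarrow> x + t *\<^sub>R m \<notin> closure \<Omega> \<and> x - t *\<^sub>R m \<in> \<Omega>)"
    define w where "w = m - (m \<bullet> n) *\<^sub>R n"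
    have "n \<bullet> w = 0" using n1 by (simp add: w_def inner_diff_right inner_commute norm_eq_1)
    then have "w \<in> tangent_space (frontier \<Omega>) x" using tangent_space_chart[OF x] by (simp add: n_def)
    then have "m \<bullet> w = 0" using m by blast
    then have "w \<bullet> w = 0"
      using \<open>n \<bullet> w = 0\<close> by (simp add: w_def inner_diff_left inner_commute)
    then have m_n: "m = (m \<bullet> n) *\<^sub>R n" by (simp add: w_def)
    have "\<bar>m \<bullet> n\<bar> = 1"
      using m n1 arg_cong[OF m_n, of norm] by simp
    moreover have "m \<bullet> n \<noteq> -1"
    proof
      assume "m \<bullet> n = -1"
      then have "m = - n" using m_n by simp
      moreover obtain e' where "e' > 0" "\<And>t. 0 < t \<Longrightarrow> t < e' \<Longrightarrow> x + t *\<^sub>R m \<notin> closure \<Omega>"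
        using m by blast
      moreover define t where "t = min e e' / 2"
      ultimately have "x - t *\<^sub>R n \<notin> closure \<Omega>" "x - t *\<^sub>R n \<in> \<Omega>"
        using sides[of t] e by (auto simp: t_def)
      then show False using closure_subset by blast
    qed
    ultimately have "m \<bullet> n = 1" by arith
    then show "m = n" using m_n by simp
  qed
qed

lemma grad_phi_differentiable: "x \<in> V \<Longrightarrow> grad_phi differentiable (at x)"
proof -
  assume "x \<in> V"
  then have "(\<lambda>y. \<phi>' y (axis j 1)) differentiable (at x)" for j
    using \<phi>'_differentiable
    by (auto simp: differentiable_def intro: blinfun.FDERIV[OF _ has_derivative_const])
  then have "(\<lambda>y. \<Sum>j\<in>UNIV. \<phi>' y (axis j 1) *\<^sub>R axis j 1) differentiable (at x)"
    by (intro differentiable_sum differentiable_scaleR) auto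
  moreover have "grad_phi = (\<lambda>y. \<Sum>j\<in>UNIV. \<phi>' y (axis j 1) *\<^sub>R axis j 1)"
    by (auto simp: fun_eq_iff grad_phi_def grad_of_def vec_eq_iff axis_def if_distrib cong: if_cong)
  ultimately show ?thesis by simp
qed

lemma nu_differentiable:
  assumes "x \<in> V" shows "nu differentiable (at x)"
proof -
  have "(\<lambda>y. norm (grad_phi y)) differentiable (at x)"
    using grad_phi_nonzero[OF assms] grad_phi_differentiable[OF assms]
    by (intro differentiable_compose[OF differentiable_norm_at]) auto
  then have "(\<lambda>y. (1 / norm (grad_phi y)) *\<^sub>R grad_phi y) differentiable (at x)"
    using grad_phi_nonzero[OF assms] grad_phi_differentiable[OF assms]
    by (intro differentiable_scaleR differentiable_divide) auto
  then show ?thesis by (simp add: nu_def[abs_def] inverse_eq_divide)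
qed

lemma nu_derivative_orthogonal:
  assumes x: "x \<in> V" and D: "(nu has_derivative D) (at x)"
  shows "nu x \<bullet> D v = 0"
proof -
  have "((\<lambda>y. nu y \<bullet> nu y) has_derivative (\<lambda>h. nu x \<bullet> D h + D h \<bullet> nu x)) (at x)"
    by (rule has_derivative_inner[OF D D])
  moreover have "((\<lambda>y. nu y \<bullet> nu y) has_derivative (\<lambda>h. 0)) (at x)"
    by (rule has_derivative_transform_within_open[OF has_derivative_const[of 1] open_V x])
       (use norm_nu in \<open>simp add: norm_eq_1\<close>)
  ultimately have "(\<lambda>h. nu x \<bullet> D h + D h \<bullet> nu x) = (\<lambda>h. 0)"
    by (rule has_derivative_unique)
  then show ?thesis by (metis inner_commute mult_2 mult_eq_0_iff zero_neq_numeral)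
qed

lemma outward_normal_eventually_nu:
  assumes "surface_curve (frontier \<Omega>) p \<gamma> v" "p \<in> V"
  shows "\<forall>\<^sub>F t in at 0. outward_normal \<Omega> (\<gamma> t) = nu (\<gamma> t)"
  using surface_curve_eventually_in[OF assms(1) open_V assms(2)] assms(1)
  by (elim eventually_mono) (auto simp: surface_curve_def intro: outward_normal_chart)

lemma shape_operator_chart:
  assumes p: "p \<in> frontier \<Omega>" "p \<in> V" and Dn: "(nu has_derivative Dn) (at p)"
    and v: "nu p \<bullet> v = 0"
  shows "shape_operator \<Omega> p v = Dn v"
  unfolding shape_operator_def
proof (rule the_equality)
  have along: "((outward_normal \<Omega> \<circ> \<gamma>) has_vector_derivative Dn v) (at 0)"
    if \<gamma>: "surface_curve (frontier \<Omega>) p \<gamma> v" for \<gamma>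
  proof -
    have "((nu \<circ> \<gamma>) has_vector_derivative Dn v) (at 0)"
      by (rule surface_curve_chain[OF has_derivative_at_withinI[OF Dn] \<gamma>])
    moreover have "\<forall>\<^sub>F t in at 0. (nu \<circ> \<gamma>) t = (outward_normal \<Omega> \<circ> \<gamma>) t"
      using outward_normal_eventually_nu[OF \<gamma> p(2)] by (auto elim: eventually_mono)
    moreover have "(nu \<circ> \<gamma>) 0 = (outward_normal \<Omega> \<circ> \<gamma>) 0"
      using \<gamma> outward_normal_chart[OF p] by (simp add: surface_curve_def)
    ultimately show ?thesis
      unfolding has_vector_derivative_def by (rule has_derivative_transform_eventually) auto
  qed
  then show "\<forall>\<gamma>. surface_curve (frontier \<Omega>) p \<gamma> v \<longrightarrow>
      ((outward_normal \<Omega> \<circ> \<gamma>) has_vector_derivative Dn v) (at 0)"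
    by blast
  fix w assume w: "\<forall>\<gamma>. surface_curve (frontier \<Omega>) p \<gamma> v \<longrightarrow>
      ((outward_normal \<Omega> \<circ> \<gamma>) has_vector_derivative w) (at 0)"
  have "v \<in> tangent_space (frontier \<Omega>) p" using tangent_space_chart[OF p] v by simp
  then obtain \<gamma> where \<gamma>: "surface_curve (frontier \<Omega>) p \<gamma> v" unfolding tangent_space_def by blast
  show "w = Dn v"
    using vector_derivative_unique_at[OF w[rule_format, OF \<gamma>] along[OF \<gamma>]] .
qed

text \<open>\<phi> decreases at a definite rate in the direction -\<nu> p, so points of the closure moved in that
  direction enter \<Omega>.\<close>

lemma inward_translates_chart:
  assumes p: "p \<in> frontier \<Omega>" "p \<in> V"
  obtains \<delta> where "\<delta> > 0" "ball p \<delta> \<subseteq> V"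
    "\<And>w t. w \<in> ball p \<delta> \<Longrightarrow> w - t *\<^sub>R nu p \<in> ball p \<delta> \<Longrightarrow> 0 < t \<Longrightarrow> \<phi> w \<le> 0 \<Longrightarrow>
       w - t *\<^sub>R nu p \<in> \<Omega>"
    "\<And>y l. y \<in> ball p \<delta> \<Longrightarrow> y \<noteq> p \<Longrightarrow> \<phi> y \<le> 0 \<Longrightarrow> 0 \<le> l \<Longrightarrow> l \<le> 1 \<Longrightarrow>
       p + l *\<^sub>R (y - p) - dist y p *\<^sub>R nu p \<in> ball p \<delta> \<Longrightarrow>
       p + l *\<^sub>R (y - p) - dist y p *\<^sub>R nu p \<in> \<Omega>"
proof -
  define n where "n = nu p"
  define c where "c = \<phi>' p n"
  have n1: "norm n = 1" using norm_nu[OF p(2)] by (simp add: n_def)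
  have "c > 0"
    using grad_phi_nonzero[OF p(2)] by (simp add: c_def n_def nu_def \<phi>'_eq_inner_grad_phi)
  obtain \<delta> where "\<delta> > 0" and ball_V: "ball p \<delta> \<subseteq> V"
    and lin: "\<And>a b. a \<in> ball p \<delta> \<Longrightarrow> b \<in> ball p \<delta> \<Longrightarrow>
       norm (\<phi> b - \<phi> a - \<phi>' p (b - a)) \<le> c / 4 * norm (b - a)"
    using uniform_linearization[OF open_V p(2) \<phi>_deriv continuous_on_\<phi>', of "c / 4"] \<open>c > 0\<close>
    by auto
  have lin_upper: "\<phi> b \<le> \<phi> a + \<phi>' p (b - a) + c / 4 * norm (b - a)"
    if "a \<in> ball p \<delta>" "b \<in> ball p \<delta>" for a b
    using abs_le_D1[OF lin[OF that, unfolded real_norm_def]] by linarith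
  have \<phi>p: "\<phi> p = 0" using p in_frontier_chart_iff by simp
  have in_\<Omega>: "q \<in> \<Omega>" if "q \<in> ball p \<delta>" "\<phi> q < 0" for q
    using that ball_V in_interior_chart_iff by blast
  show thesis
  proof (rule that[OF \<open>\<delta> > 0\<close> ball_V, folded n_def])
    fix w t assume wt: "w \<in> ball p \<delta>" "w - t *\<^sub>R n \<in> ball p \<delta>" "0 < t" "\<phi> w \<le> 0"
    have "\<phi> (w - t *\<^sub>R n) \<le> \<phi> w - 3 / 4 * (c * t)"
      using lin_upper[OF wt(1,2)] n1 \<open>t > 0\<close>
      by (simp add: blinfun.minus_right blinfun.scaleR_right c_def mult.commute)
    moreover have "c * t > 0" using wt(3) \<open>c > 0\<close> by simp
    ultimately show "w - t *\<^sub>R n \<in> \<Omega>" using wt(2,4) in_\<Omega> by force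
  next
    fix y l assume y: "y \<in> ball p \<delta>" "y \<noteq> p" "\<phi> y \<le> 0" and l: "0 \<le> l" "l \<le> 1"
      and q\<delta>: "p + l *\<^sub>R (y - p) - dist y p *\<^sub>R n \<in> ball p \<delta>"
    define s where "s = dist y p"
    define q where "q = p + l *\<^sub>R (y - p) - s *\<^sub>R n"
    have q_p: "q - p = l *\<^sub>R (y - p) - s *\<^sub>R n" by (simp add: q_def)
    have q_ball: "q \<in> ball p \<delta>" using q\<delta> by (simp add: q_def s_def)
    have "\<phi>' p (y - p) \<le> c / 4 * s"
      using abs_le_D2[OF lin[OF _ y(1), of p, unfolded real_norm_def]] y(3) \<phi>p \<open>\<delta> > 0\<close>
      by (simp add: s_def dist_norm)
    then have "l * \<phi>' p (y - p) \<le> l * (c / 4 * s)"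
      using l(1) by (rule mult_left_mono)
    also have "\<dots> \<le> c / 4 * s"
      using l \<open>c > 0\<close> by (intro mult_left_le_one_le) (auto simp: s_def)
    finally have l_bound: "l * \<phi>' p (y - p) \<le> c / 4 * s" .
    have "norm (q - p) \<le> l * s + s"
      unfolding q_p using norm_triangle_ineq4[of "l *\<^sub>R (y - p)" "s *\<^sub>R n"] l n1
      by (simp add: s_def dist_norm)
    also have "\<dots> \<le> 2 * s" using l by (simp add: s_def mult_left_le_one_le)
    finally have "c / 4 * norm (q - p) \<le> c / 4 * (2 * s)"
      using \<open>c > 0\<close> by (intro mult_left_mono) auto
    moreover note l_bound
    moreover have "\<phi> q \<le> \<phi> p + \<phi>' p (q - p) + c / 4 * norm (q - p)"
      using lin_upper[OF _ q_ball, of p] \<open>\<delta> > 0\<close> by simp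
    moreover have "\<phi>' p (q - p) = l * \<phi>' p (y - p) - c * s"
      unfolding q_p by (simp add: blinfun.diff_right blinfun.scaleR_right c_def mult.commute)
    moreover have "c * s > 0" using \<open>c > 0\<close> y(2) by (simp add: s_def)
    moreover have "c / 4 * s = c * s / 4" "c / 4 * (2 * s) = c * s / 2" by simp_all
    ultimately have "\<phi> q < 0" using \<phi>p by linarith
    then show "p + l *\<^sub>R (y - p) - dist y p *\<^sub>R n \<in> \<Omega>"
      using in_\<Omega>[OF q_ball] by (simp add: q_def s_def)
  qed
qed

text \<open>The three segments: down along the normal from p, across parallel to y - p, and up to y.\<close>

lemma polygonal_access_chart:
  assumes p: "p \<in> frontier \<Omega>" "p \<in> V"
  obtains r where "r > 0"
    "\<And>y. y \<in> closure \<Omega> \<Longrightarrow> 0 < dist y p \<Longrightarrow> dist y p < r \<Longrightarrow>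
       \<exists>a b. open_segment p a \<union> closed_segment a b \<union> open_segment b y \<subseteq> \<Omega> \<and>
             dist a p + dist b a + dist y b \<le> 3 * dist y p"
proof -
  define n where "n = nu p"
  have n1: "norm n = 1" using norm_nu[OF p(2)] by (simp add: n_def)
  have \<phi>p: "\<phi> p = 0" using p in_frontier_chart_iff by simp
  obtain \<delta> where "\<delta> > 0" and ball_V: "ball p \<delta> \<subseteq> V"
    and vertical: "\<And>w t. w \<in> ball p \<delta> \<Longrightarrow> w - t *\<^sub>R n \<in> ball p \<delta> \<Longrightarrow> 0 < t \<Longrightarrow> \<phi> w \<le> 0 \<Longrightarrow>
       w - t *\<^sub>R n \<in> \<Omega>"
    and slanted: "\<And>y l. y \<in> ball p \<delta> \<Longrightarrow> y \<noteq> p \<Longrightarrow> \<phi> y \<le> 0 \<Longrightarrow> 0 \<le> l \<Longrightarrow> l \<le> 1 \<Longrightarrow>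
       p + l *\<^sub>R (y - p) - dist y p *\<^sub>R n \<in> ball p \<delta> \<Longrightarrow> p + l *\<^sub>R (y - p) - dist y p *\<^sub>R n \<in> \<Omega>"
    using inward_translates_chart[OF p] unfolding n_def by blast
  show thesis
  proof
    show "\<delta> / 2 > 0" using \<open>\<delta> > 0\<close> by simp
    fix y assume y: "y \<in> closure \<Omega>" "0 < dist y p" "dist y p < \<delta> / 2"
    define s where "s = dist y p"
    have near: "q \<in> ball p \<delta>" if "dist q p \<le> 2 * s" for q
      using that y by (simp add: s_def dist_commute)
    have y\<delta>: "y \<in> ball p \<delta>" using near[of y] y by (simp add: s_def)
    have \<phi>y: "\<phi> y \<le> 0" using y(1) y\<delta> ball_V in_closure_chart_iff by blast
    define a where "a = p - s *\<^sub>R n"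
    define b where "b = y - s *\<^sub>R n"
    have "open_segment p a \<subseteq> \<Omega>"
    proof
      fix q assume "q \<in> open_segment p a"
      then obtain l where l: "0 < l" "l < 1" "q = p - (l * s) *\<^sub>R n"
        by (auto simp: in_segment a_def algebra_simps)
      show "q \<in> \<Omega>"
        unfolding l(3) using l y n1 \<phi>p
        by (intro vertical near) (auto simp: s_def dist_norm mult_le_cancel_right1)
    qed
    moreover have "open_segment b y \<subseteq> \<Omega>"
    proof
      fix q assume "q \<in> open_segment b y"
      then obtain l where l: "0 < l" "l < 1" "q = y - ((1 - l) * s) *\<^sub>R n"
        by (auto simp: in_segment b_def algebra_simps)
      have "(1 - l) * s \<le> s" using l by (intro mult_left_le_one_le) (auto simp: s_def)
      moreover have "dist q p \<le> dist q y + dist y p" by (rule dist_triangle)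
      ultimately have "dist q p \<le> 2 * s"
        using l n1 by (simp add: l(3) s_def dist_norm)
      then show "q \<in> \<Omega>"
        unfolding l(3) using l y\<delta> \<phi>y y
        by (intro vertical near) (auto simp: s_def)
    qed
    moreover have "closed_segment a b \<subseteq> \<Omega>"
    proof
      fix q assume "q \<in> closed_segment a b"
      then obtain l where l: "0 \<le> l" "l \<le> 1" "q = p + l *\<^sub>R (y - p) - s *\<^sub>R n"
        by (auto simp: closed_segment_def a_def b_def algebra_simps)
      have "norm (l *\<^sub>R (y - p) - s *\<^sub>R n) \<le> l * s + s"
        using norm_triangle_ineq4[of "l *\<^sub>R (y - p)" "s *\<^sub>R n"] l n1
        by (simp add: s_def dist_norm)
      also have "\<dots> \<le> 2 * s" using l by (simp add: s_def mult_left_le_one_le)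
      finally have "q \<in> ball p \<delta>" using near[of q] by (simp add: l(3) dist_norm)
      then show "q \<in> \<Omega>"
        using slanted[OF y\<delta> _ \<phi>y l(1,2)] y(2) by (simp add: l(3) s_def)
    qed
    moreover have "dist a p + dist b a + dist y b \<le> 3 * s"
      using n1 by (simp add: a_def b_def s_def dist_norm)
    ultimately show "\<exists>a b. open_segment p a \<union> closed_segment a b \<union> open_segment b y \<subseteq> \<Omega> \<and>
        dist a p + dist b a + dist y b \<le> 3 * dist y p"
      by (auto simp: s_def)
  qed
qed

lemma has_derivative_within_closure_chart:
  assumes p: "p \<in> frontier \<Omega>" "p \<in> V" and u: "C1_up_to_boundary \<Omega> u Du"
  shows "(u has_derivative blinfun_apply (Du p)) (at p within closure \<Omega>)"
proof -
  obtain r where "r > 0" and access: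
    "\<And>y. y \<in> closure \<Omega> \<Longrightarrow> 0 < dist y p \<Longrightarrow> dist y p < r \<Longrightarrow>
       \<exists>a b. open_segment p a \<union> closed_segment a b \<union> open_segment b y \<subseteq> \<Omega> \<and>
             dist a p + dist b a + dist y b \<le> 3 * dist y p"
    using polygonal_access_chart[OF p] by blast
  have "p \<in> closure \<Omega>" using p(1) by (simp add: frontier_def)
  with u \<open>r > 0\<close> access show ?thesis
    unfolding C1_up_to_boundary_def
    by (intro has_derivative_within_closure_polygonal[where r = r and C = 3]) auto
qed

lemma boundary_derivatives_chart:
  assumes p: "p \<in> frontier \<Omega>" "p \<in> V" and u: "C1_up_to_boundary \<Omega> u Du"
    and Dn: "(nu has_derivative Dn) (at p)"
  defines "Lf \<equiv> \<lambda>h. u p \<bullet> Dn h + Du p h \<bullet> nu p"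
  shows "(normal_comp \<Omega> u has_derivative Lf) (at p within frontier \<Omega>)"
    and "(tangential_part \<Omega> u has_derivative
           (\<lambda>h. Du p h - ((u p \<bullet> nu p) *\<^sub>R Dn h + Lf h *\<^sub>R nu p))) (at p within frontier \<Omega>)"
proof -
  have uD: "(u has_derivative blinfun_apply (Du p)) (at p within frontier \<Omega>)"
    using has_derivative_subset[OF has_derivative_within_closure_chart[OF p u]]
    by (simp add: frontier_def)
  have nD: "(nu has_derivative Dn) (at p within frontier \<Omega>)"
    using Dn by (rule has_derivative_at_withinI)
  have nc: "((\<lambda>x. u x \<bullet> nu x) has_derivative Lf) (at p within frontier \<Omega>)"
    unfolding Lf_def by (rule has_derivative_inner[OF uD nD])
  obtain d where "d > 0" "ball p d \<subseteq> V" using open_V p(2) open_contains_ball by blast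
  then have normal_eq: "outward_normal \<Omega> x = nu x" if "x \<in> frontier \<Omega>" "dist x p < d" for x
    using that outward_normal_chart by (auto simp: dist_commute)
  show "(normal_comp \<Omega> u has_derivative Lf) (at p within frontier \<Omega>)"
    by (rule has_derivative_transform_within[OF nc \<open>d > 0\<close> p(1)])
       (simp add: normal_comp_def normal_eq)
  show "(tangential_part \<Omega> u has_derivative
      (\<lambda>h. Du p h - ((u p \<bullet> nu p) *\<^sub>R Dn h + Lf h *\<^sub>R nu p))) (at p within frontier \<Omega>)"
    by (rule has_derivative_transform_within[OF has_derivative_diff[OF uD has_derivative_scaleR[OF nc nD]]
          \<open>d > 0\<close> p(1)])
       (simp add: tangential_part_def normal_comp_def normal_eq)
qed

lemma trace_normal_derivative_chart:
  assumes p: "p \<in> frontier \<Omega>" "p \<in> V" and Dn: "(nu has_derivative Dn) (at p)"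
    and curv: "principal_curvatures \<Omega> p k1 k2"
  shows "trace (matrix Dn) = k1 + k2"
proof -
  define n where "n = nu p"
  have n1: "norm n = 1" using norm_nu[OF p(2)] by (simp add: n_def)
  obtain e1 e2 where e: "e1 \<in> tangent_space (frontier \<Omega>) p" "e2 \<in> tangent_space (frontier \<Omega>) p"
    "norm e1 = 1" "norm e2 = 1" "e1 \<bullet> e2 = 0"
    "shape_operator \<Omega> p e1 = k1 *\<^sub>R e1" "shape_operator \<Omega> p e2 = k2 *\<^sub>R e2"
    using curv unfolding principal_curvatures_def by blast
  have en: "n \<bullet> e1 = 0" "n \<bullet> e2 = 0" using e(1,2) tangent_space_chart[OF p] by (auto simp: n_def)
  have De: "Dn e1 = k1 *\<^sub>R e1" "Dn e2 = k2 *\<^sub>R e2"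
    using shape_operator_chart[OF p Dn] e(6,7) en by (auto simp: n_def)
  have "trace (matrix Dn) = e1 \<bullet> Dn e1 + e2 \<bullet> Dn e2 + n \<bullet> Dn n"
    using trace_matrix_orthonormal_triple[OF has_derivative_linear[OF Dn] e(3,4) n1 e(5)] en
    by (simp add: inner_commute)
  also have "\<dots> = k1 + k2"
    using De nu_derivative_orthogonal[OF p(2) Dn] e(3,4) by (simp add: norm_eq_1 n_def)
  finally show ?thesis .
qed

lemma normal_acceleration_formulas_chart:
  assumes p: "p \<in> frontier \<Omega>" "p \<in> V" and u: "C1_up_to_boundary \<Omega> u Du"
    and div: "\<forall>x\<in>\<Omega>. divergence (Du x) = 0" and curv: "principal_curvatures \<Omega> p k1 k2"
  shows "blinfun_apply (Du p) (u p) \<bullet> outward_normal \<Omega> p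
           = tangential_part \<Omega> u p \<bullet> surface_grad (frontier \<Omega>) (normal_comp \<Omega> u) p
             - normal_comp \<Omega> u p * surface_div (frontier \<Omega>) (tangential_part \<Omega> u) p
             - (k1 + k2) * (normal_comp \<Omega> u p)^2
             - tangential_part \<Omega> u p \<bullet> shape_operator \<Omega> p (tangential_part \<Omega> u p)
         \<and> blinfun_apply (Du p) (u p) \<bullet> outward_normal \<Omega> p
           = 2 * (tangential_part \<Omega> u p \<bullet> surface_grad (frontier \<Omega>) (normal_comp \<Omega> u) p)
             - surface_div (frontier \<Omega>) (\<lambda>x. normal_comp \<Omega> u x *\<^sub>R tangential_part \<Omega> u x) p
             - (k1 + k2) * (normal_comp \<Omega> u p)^2
             - tangential_part \<Omega> u p \<bullet> shape_operator \<Omega> p (tangential_part \<Omega> u p)"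
proof -
  obtain Dn where Dn: "(nu has_derivative Dn) (at p)"
    using nu_differentiable[OF p(2)] by (auto simp: differentiable_def)
  define n where "n = nu p"
  define a where "a = u p"
  define Lf where "Lf = (\<lambda>h. a \<bullet> Dn h + Du p h \<bullet> n)"
  define Mt where "Mt = (\<lambda>h. Du p h - ((a \<bullet> n) *\<^sub>R Dn h + Lf h *\<^sub>R n))"
  define K where "K = (\<lambda>h. (a \<bullet> n) *\<^sub>R Mt h + Lf h *\<^sub>R (a - (a \<bullet> n) *\<^sub>R n))"
  have n1: "norm n = 1" using norm_nu[OF p(2)] by (simp add: n_def)
  have T: "tangent_space (frontier \<Omega>) p = {v. n \<bullet> v = 0}"
    using tangent_space_chart[OF p] by (simp add: n_def)
  have normal_p: "outward_normal \<Omega> p = n" using outward_normal_chart[OF p] by (simp add: n_def)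
  have nc_p: "normal_comp \<Omega> u p = a \<bullet> n" by (simp add: normal_comp_def normal_p a_def)
  have tp_p: "tangential_part \<Omega> u p = a - (a \<bullet> n) *\<^sub>R n"
    by (simp add: tangential_part_def nc_p normal_p a_def)
  have Dn_orth: "n \<bullet> Dn w = 0" for w
    using nu_derivative_orthogonal[OF p(2) Dn] by (simp add: n_def)
  have derivs: "(normal_comp \<Omega> u has_derivative Lf) (at p within frontier \<Omega>)"
      "(tangential_part \<Omega> u has_derivative Mt) (at p within frontier \<Omega>)"
    using boundary_derivatives_chart[OF p u Dn] by (simp_all add: Lf_def Mt_def n_def a_def)
  have sg: "surface_grad (frontier \<Omega>) (normal_comp \<Omega> u) p = grad_of Lf - (grad_of Lf \<bullet> n) *\<^sub>R n"
    by (rule surface_grad_eq[OF T n1 derivs(1)])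
  have sd_Mt: "surface_div (frontier \<Omega>) (tangential_part \<Omega> u) p = trace (matrix Mt) - n \<bullet> Mt n"
    by (rule surface_div_eq[OF T n1 derivs(2)])
  have sd_K: "surface_div (frontier \<Omega>) (\<lambda>x. normal_comp \<Omega> u x *\<^sub>R tangential_part \<Omega> u x) p
      = trace (matrix K) - n \<bullet> K n"
    using surface_div_eq[OF T n1 has_derivative_scaleR[OF derivs]] by (simp add: K_def nc_p tp_p)
  have aT_tangent: "n \<bullet> (a - (a \<bullet> n) *\<^sub>R n) = 0"
    using n1 by (simp add: inner_diff_right inner_commute norm_eq_1)
  then have aT_sg: "(a - (a \<bullet> n) *\<^sub>R n) \<bullet> (grad_of Lf - (grad_of Lf \<bullet> n) *\<^sub>R n)
      = (a - (a \<bullet> n) *\<^sub>R n) \<bullet> grad_of Lf"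
    by (simp add: inner_diff_right inner_commute)
  have so: "shape_operator \<Omega> p (a - (a \<bullet> n) *\<^sub>R n) = Dn (a - (a \<bullet> n) *\<^sub>R n)"
    using shape_operator_chart[OF p Dn] aT_tangent by (simp add: n_def)
  have trace_Dn: "trace (matrix Dn) = k1 + k2"
    by (rule trace_normal_derivative_chart[OF p Dn curv])
  have trace_Du: "trace (matrix (blinfun_apply (Du p))) = 0"
    using divergence_zero_on_closure[OF u div] p(1)
    by (simp add: divergence_eq_trace frontier_def)
  note identity = normal_derivative_identity[OF _ bounded_linear.linear[OF blinfun.bounded_linear_right]
      trace_Du has_derivative_linear[OF Dn] Dn_orth Lf_def Mt_def K_def]
  show ?thesis
    using identity n1 unfolding sg sd_Mt sd_K nc_p tp_p normal_p so aT_sg trace_Dn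
    by (simp add: a_def norm_eq_1)
qed

lemma normal_acceleration_eq_on_components_chart:
  assumes p: "p \<in> frontier \<Omega>" "p \<in> V"
    and u: "C1_up_to_boundary \<Omega> u Du" "\<forall>x\<in>\<Omega>. divergence (Du x) = 0"
    and U: "C1_up_to_boundary \<Omega> U DU" "\<forall>x\<in>\<Omega>. divergence (DU x) = 0"
    and G: "union_of_boundary_components \<Omega> G" "p \<in> G" and eq: "\<forall>x\<in>G. u x = U x"
    and curv: "principal_curvatures \<Omega> p k1 k2"
  shows "blinfun_apply (Du p) (u p) \<bullet> outward_normal \<Omega> p
       = blinfun_apply (DU p) (U p) \<bullet> outward_normal \<Omega> p"
proof -
  obtain Dn where Dn: "(nu has_derivative Dn) (at p)"
    using nu_differentiable[OF p(2)] by (auto simp: differentiable_def)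
  define n where "n = nu p"
  have n1: "norm n = 1" using norm_nu[OF p(2)] by (simp add: n_def)
  have T: "tangent_space (frontier \<Omega>) p = {v. n \<bullet> v = 0}"
    using tangent_space_chart[OF p] by (simp add: n_def)
  have curves_in_G: "\<exists>\<gamma>. surface_curve (frontier \<Omega>) p \<gamma> v \<and> (\<forall>t. \<gamma> t \<in> G)" if "n \<bullet> v = 0" for v
  proof -
    have "\<phi>' p v = 0" using that nu_orthogonal_iff[OF p(2)] by (simp add: n_def)
    then obtain \<gamma> where "surface_curve (frontier \<Omega>) p \<gamma> v"
      "range \<gamma> \<subseteq> connected_component_set (frontier \<Omega>) p"
      by (rule boundary_curve_with_velocity[OF p])
    then show ?thesis using G unfolding union_of_boundary_components_def by blast
  qed
  note du = boundary_derivatives_chart[OF p u(1) Dn] and dU = boundary_derivatives_chart[OF p U(1) Dn]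
  have "surface_grad (frontier \<Omega>) (normal_comp \<Omega> u) p = surface_grad (frontier \<Omega>) (normal_comp \<Omega> U) p"
    by (rule surface_grad_cong[OF T n1 du(1) dU(1)])
       (use curves_in_G eq in \<open>fastforce simp: normal_comp_def\<close>)
  moreover have "surface_div (frontier \<Omega>) (tangential_part \<Omega> u) p
      = surface_div (frontier \<Omega>) (tangential_part \<Omega> U) p"
    by (rule surface_div_cong[OF T n1 du(2) dU(2)])
       (use curves_in_G eq in \<open>fastforce simp: tangential_part_def normal_comp_def\<close>)
  moreover have "u p = U p" using eq G(2) by blast
  ultimately show ?thesis
    using normal_acceleration_formulas_chart[OF p u curv, THEN conjunct1]
      normal_acceleration_formulas_chart[OF p U curv, THEN conjunct1]
    by (simp add: normal_comp_def tangential_part_def)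
qed

end

lemma boundary_chart_at:
  assumes "C2_boundary \<Omega>" "p \<in> frontier \<Omega>"
  obtains V \<phi> \<phi>' where "boundary_chart \<Omega> V \<phi> \<phi>'" "p \<in> V"
proof -
  obtain V and \<phi> :: "real^3 \<Rightarrow> real" and \<phi>' where chart: "open V" "p \<in> V"
    "\<forall>x\<in>V. (\<phi> has_derivative blinfun_apply (\<phi>' x)) (at x)" "C1_on V \<phi>'"
    "\<forall>x\<in>V. \<phi>' x \<noteq> 0" "\<Omega> \<inter> V = {x\<in>V. \<phi> x < 0}" "frontier \<Omega> \<inter> V = {x\<in>V. \<phi> x = 0}"
    using assms(1)[unfolded C2_boundary_def, rule_format, OF assms(2)] by blast
  then have "\<phi>' differentiable (at x)" if "x \<in> V" for x
    using that unfolding C1_on_def differentiable_def by blast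
  with chart have "boundary_chart \<Omega> V \<phi> \<phi>'"
    by unfold_locales auto
  then show thesis using chart(2) by (rule that)
qed

lemma normal_acceleration_formulas:
  assumes C2: "C2_boundary \<Omega>" and p: "p \<in> frontier \<Omega>"
    and u: "C1_up_to_boundary \<Omega> u Du" and div: "\<forall>x\<in>\<Omega>. divergence (Du x) = 0"
    and curv: "principal_curvatures \<Omega> p k1 k2"
  shows "blinfun_apply (Du p) (u p) \<bullet> outward_normal \<Omega> p
           = tangential_part \<Omega> u p \<bullet> surface_grad (frontier \<Omega>) (normal_comp \<Omega> u) p
             - normal_comp \<Omega> u p * surface_div (frontier \<Omega>) (tangential_part \<Omega> u) p
             - (k1 + k2) * (normal_comp \<Omega> u p)^2
             - tangential_part \<Omega> u p \<bullet> shape_operator \<Omega> p (tangential_part \<Omega> u p)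
         \<and> blinfun_apply (Du p) (u p) \<bullet> outward_normal \<Omega> p
           = 2 * (tangential_part \<Omega> u p \<bullet> surface_grad (frontier \<Omega>) (normal_comp \<Omega> u) p)
             - surface_div (frontier \<Omega>) (\<lambda>x. normal_comp \<Omega> u x *\<^sub>R tangential_part \<Omega> u x) p
             - (k1 + k2) * (normal_comp \<Omega> u p)^2
             - tangential_part \<Omega> u p \<bullet> shape_operator \<Omega> p (tangential_part \<Omega> u p)"
proof -
  obtain V \<phi> \<phi>' where "boundary_chart \<Omega> V \<phi> \<phi>'" "p \<in> V"
    using boundary_chart_at[OF C2 p] by blast
  then show ?thesis using boundary_chart.normal_acceleration_formulas_chart p u div curv by blast
qed

lemma normal_acceleration_eq_on_boundary_components:
  assumes C2: "C2_boundary \<Omega>"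
    and u: "C1_up_to_boundary \<Omega> u Du" "\<forall>x\<in>\<Omega>. divergence (Du x) = 0"
    and U: "C1_up_to_boundary \<Omega> U DU" "\<forall>x\<in>\<Omega>. divergence (DU x) = 0"
    and G: "union_of_boundary_components \<Omega> G" "\<forall>x\<in>G. u x = U x" "p \<in> G"
    and curvatures: "\<forall>p\<in>frontier \<Omega>. principal_curvatures \<Omega> p (k1 p) (k2 p)"
  shows "blinfun_apply (Du p) (u p) \<bullet> outward_normal \<Omega> p
       = blinfun_apply (DU p) (U p) \<bullet> outward_normal \<Omega> p"
proof -
  have p: "p \<in> frontier \<Omega>" using G by (auto simp: union_of_boundary_components_def)
  then have curv: "principal_curvatures \<Omega> p (k1 p) (k2 p)" using curvatures by blast
  obtain V \<phi> \<phi>' where "boundary_chart \<Omega> V \<phi> \<phi>'" "p \<in> V"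
    using boundary_chart_at[OF C2 p] by blast
  then show ?thesis
    using boundary_chart.normal_acceleration_eq_on_components_chart[OF _ p _ u U G(1,3,2) curv]
    by blast
qed

theorem proposition9p2:
  fixes \<Omega> :: "(real^3) set" and u :: "real^3 \<Rightarrow> real^3"
    and Du :: "real^3 \<Rightarrow> ((real^3) \<Rightarrow>\<^sub>L (real^3))" and k1 k2 :: "real^3 \<Rightarrow> real"
  assumes dom: "bounded_C2_domain \<Omega>"
    and u_C1: "C1_up_to_boundary \<Omega> u Du"
    and u_div: "\<forall>x\<in>\<Omega>. divergence (Du x) = 0"
    and curv: "\<forall>p\<in>frontier \<Omega>. principal_curvatures \<Omega> p (k1 p) (k2 p)"
  shows "(\<forall>p\<in>frontier \<Omega>.
            blinfun_apply (Du p) (u p) \<bullet> outward_normal \<Omega> p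
              = tangential_part \<Omega> u p \<bullet> surface_grad (frontier \<Omega>) (normal_comp \<Omega> u) p
                - normal_comp \<Omega> u p * surface_div (frontier \<Omega>) (tangential_part \<Omega> u) p
                - (k1 p + k2 p) * (normal_comp \<Omega> u p)^2
                - tangential_part \<Omega> u p \<bullet> shape_operator \<Omega> p (tangential_part \<Omega> u p)
          \<and> blinfun_apply (Du p) (u p) \<bullet> outward_normal \<Omega> p
              = 2 * (tangential_part \<Omega> u p \<bullet> surface_grad (frontier \<Omega>) (normal_comp \<Omega> u) p)
                - surface_div (frontier \<Omega>) (\<lambda>x. normal_comp \<Omega> u x *\<^sub>R tangential_part \<Omega> u x) p
                - (k1 p + k2 p) * (normal_comp \<Omega> u p)^2
                - tangential_part \<Omega> u p \<bullet> shape_operator \<Omega> p (tangential_part \<Omega> u p))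
      \<and> (\<forall>U DU G. C1_up_to_boundary \<Omega> U DU \<and> (\<forall>x\<in>\<Omega>. divergence (DU x) = 0) \<and>
            union_of_boundary_components \<Omega> G \<and> (\<forall>x\<in>G. u x = U x) \<longrightarrow>
            (\<forall>p\<in>G. blinfun_apply (Du p) (u p) \<bullet> outward_normal \<Omega> p
                    = blinfun_apply (DU p) (U p) \<bullet> outward_normal \<Omega> p))"
proof -
  have C2: "C2_boundary \<Omega>" using dom by (simp add: bounded_C2_domain_def)
  show ?thesis
    using normal_acceleration_formulas[OF C2 _ u_C1 u_div]
      normal_acceleration_eq_on_boundary_components[OF C2 u_C1 u_div _ _ _ _ _ curv] curv
    by auto
qed

end
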